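(* Let $A=(A(i,j))_{i,j\in\mathbb{N}}$ be an infinite matrix with entries in $\{0,1\}$, let $(X,\mu)$ be a $\sigma$-finite measure space and let $(\{f_i\}_{i=1}^\infty,\{D_i\}_{i=1}^\infty)$ together with a nonsingular $F:X\to X$ be an $A_\infty$-branching system on $(X,\mu)$. For $i\in\mathbb{N}$ let $T_i\in\mathcal{B}(L_2(X,\mu))$ be the operator $T_i\phi=\chi_{R_i}\cdot(\Phi_{f_i^{-1}})^{1/2}\cdot(\phi\circ F)$, with adjoint $T_i^*$. Let $\varphi\in L_1(X,\mu)$ with $\varphi\geq0$ $\mu$-a.e. (so $\sqrt{\varphi}\in L_2(X,\mu)$). 1. If $N\in\mathbb{N}$ and $\operatorname{supp}(\varphi)\subseteq\bigcup_{i=1}^N R_i$, then $P_F(\varphi)=\sum_{i=1}^N\left(T_i^*\sqrt{\varphi}\right)^2$. 2. If $\operatorname{supp}(\varphi)\subseteq\bigcup_{i=1}^\infty R_i$, then $P_F(\varphi)=\lim_{N\to\infty}\sum_{i=1}^N\left(T_i^*\sqrt{\varphi}\right)^2$, with convergence in the norm of $L_1(X,\mu)$.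
   Context: Notation: for measurable $Y,Z\subseteq X$, write $Y\stackrel{\mu\text{-a.e.}}{=}Z$ if $\mu(Y\setminus Z)=0=\mu(Z\setminus Y)$. For a measurable map $h$ on a measurable set $W$, $\mu\circ h$ is the measure $E\mapsto\mu(h(E))$ on $W$. For finite $U,V\subseteq\mathbb{N}$ and $j\in\mathbb{N}$ put $A(U,V,j)=\prod_{u\in U}A(u,j)\prod_{v\in V}(1-A(v,j))$. A transformation $F$ is nonsingular if $\mu(F^{-1}(E))=0$ whenever $\mu(E)=0$. The Perron-Frobenius operator $P_F:L_1(X,\mu)\to L_1(X,\mu)$ is defined by $\int_E P_F\psi\,d\mu=\int_{F^{-1}(E)}\psi\,d\mu$ for all measurable $E\subseteq X$ and $\psi\in L_1(X,\mu)$. An $A_\infty$-branching system on $(X,\mu)$ is a family $(\{f_i\}_{i=1}^\infty,\{D_i\}_{i=1}^\infty)$ together with a nonsingular transformation $F:X\to X$ such that: (1) $f_i:D_i\to R_i$ is measurable, $D_i,R_i$ are measurable subsets of $X$, and $f_i(D_i)\stackrel{\mu\text{-a.e.}}{=}R_i$ for each $i$; (2) $F\circ f_i=\mathrm{id}_{D_i}$ $\mu$-a.e. on $D_i$ for each $i$; (3) $\mu(R_i\cap R_j)=0$ for $i\neq j$; (4) $\mu(R_j\cap D_i)=0$ if $A(i,j)=0$ and $\mu(R_j\setminus D_i)=0$ if $A(i,j)=1$; (5) for each pair $U,V$ of finite subsets of $\mathbb{N}$ such that $A(U,V,j)=1$ for only finitely many $j$, $\bigcap_{u\in U}D_u\cap\bigcap_{v\in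 V}(X\setminus D_v)\stackrel{\mu\text{-a.e.}}{=}\bigcup_{j:A(U,V,j)=1}R_j$; (6) there exist the Radon-Nikodym derivatives $\Phi_{f_i}$ of $\mu\circ f_i$ with respect to $\mu$ on $D_i$ and $\Phi_{f_i^{-1}}$ of $\mu\circ f_i^{-1}$ with respect to $\mu$ on $R_i$, where $f_i^{-1}:=F|_{R_i}$. The functions $\Phi_{f_i}$, $\Phi_{f_i^{-1}}$ are extended by $0$ outside $D_i$, respectively $R_i$. (The operators $T_i$ are the images $\pi(S_i)$ of the canonical generators of the Cuntz–Krieger algebra $O_A$ under the representation induced by the branching system.) *)

theory Defs
  imports "HOL-Analysis.Analysis"
begin

text \<open>Indices: the paper's index set \<open>\<nat>\<close> is rendered as the type nat.
  Functions on X are real-valued.\<close>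

definition aeeq :: "'a measure \<Rightarrow> 'a set \<Rightarrow> 'a set \<Rightarrow> bool" where
  "aeeq M Y Z \<longleftrightarrow> Y \<in> sets M \<and> Z \<in> sets M \<and>
     emeasure M (Y - Z) = 0 \<and> emeasure M (Z - Y) = 0"

definition Aset :: "(nat \<Rightarrow> nat \<Rightarrow> nat) \<Rightarrow> nat set \<Rightarrow> nat set \<Rightarrow> nat \<Rightarrow> nat" where
  "Aset A U V j = (\<Prod>u\<in>U. A u j) * (\<Prod>v\<in>V. (1 - A v j))"

definition nonsingular :: "'a measure \<Rightarrow> ('a \<Rightarrow> 'a) \<Rightarrow> bool" where
  "nonsingular M F \<longleftrightarrow> F \<in> measurable M M \<and>
     (\<forall>E\<in>sets M. emeasure M E = 0 \<longrightarrow> emeasure M (F -` E \<inter> space M) = 0)"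

text \<open>\<open>Phi_f i\<close> is the Radon-Nikodym derivative of \<open>\<mu> \<circ> f_i\<close> w.r.t. \<open>\<mu>\<close> on \<open>D_i\<close>,
  \<open>Phi_finv i\<close> that of \<open>\<mu> \<circ> f_i\<^sup>-\<^sup>1\<close> (with \<open>f_i\<^sup>-\<^sup>1 = F|R_i\<close>) on \<open>R_i\<close>,
  both extended by 0.\<close>
definition A_inf_branching_system ::
  "'a measure \<Rightarrow> (nat \<Rightarrow> nat \<Rightarrow> nat) \<Rightarrow> (nat \<Rightarrow> 'a \<Rightarrow> 'a) \<Rightarrow> (nat \<Rightarrow> 'a set)
   \<Rightarrow> (nat \<Rightarrow> 'a set) \<Rightarrow> ('a \<Rightarrow> 'a) \<Rightarrow> (nat \<Rightarrow> 'a \<Rightarrow> real) \<Rightarrow> (nat \<Rightarrow> 'a \<Rightarrow> real) \<Rightarrow> bool"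
where
  "A_inf_branching_system M A f D R F Phi_f Phi_finv \<longleftrightarrow>
     nonsingular M F \<and>
     \<comment> \<open>(1)\<close>
     (\<forall>i. D i \<in> sets M \<and> R i \<in> sets M \<and>
          f i \<in> measurable (restrict_space M (D i)) M \<and>
          f i ` D i \<subseteq> R i \<and> aeeq M (f i ` D i) (R i)) \<and>
     \<comment> \<open>(2)\<close>
     (\<forall>i. AE x in M. x \<in> D i \<longrightarrow> F (f i x) = x) \<and>
     \<comment> \<open>(3)\<close>
     (\<forall>i j. i \<noteq> j \<longrightarrow> emeasure M (R i \<inter> R j) = 0) \<and>
     \<comment> \<open>(4)\<close>
     (\<forall>i j. (A i j = 0 \<longrightarrow> emeasure M (R j \<inter> D i) = 0) \<and>
            (A i j = 1 \<longrightarrow> emeasure M (R j - D i) = 0)) \<and>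
     \<comment> \<open>(5)\<close>
     (\<forall>U V. finite U \<longrightarrow> finite V \<longrightarrow> finite {j. Aset A U V j = 1} \<longrightarrow>
        aeeq M (space M \<inter> (\<Inter>u\<in>U. D u) \<inter> (\<Inter>v\<in>V. space M - D v))
               (\<Union>j\<in>{j. Aset A U V j = 1}. R j)) \<and>
     \<comment> \<open>(6)\<close>
     (\<forall>i. Phi_f i \<in> borel_measurable M \<and> (\<forall>x\<in>space M. Phi_f i x \<ge> 0) \<and>
          (\<forall>x. x \<notin> D i \<longrightarrow> Phi_f i x = 0) \<and>
          (\<forall>E\<in>sets M. E \<subseteq> D i \<longrightarrow>
              f i ` E \<in> sets M \<and>
              emeasure M (f i ` E) = (\<integral>\<^sup>+x\<in>E. ennreal (Phi_f i x) \<partial>M))) \<and>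
     (\<forall>i. Phi_finv i \<in> borel_measurable M \<and> (\<forall>x\<in>space M. Phi_finv i x \<ge> 0) \<and>
          (\<forall>x. x \<notin> R i \<longrightarrow> Phi_finv i x = 0) \<and>
          (\<forall>E\<in>sets M. E \<subseteq> R i \<longrightarrow>
              F ` E \<in> sets M \<and>
              emeasure M (F ` E) = (\<integral>\<^sup>+x\<in>E. ennreal (Phi_finv i x) \<partial>M)))"

definition L2 :: "'a measure \<Rightarrow> ('a \<Rightarrow> real) \<Rightarrow> bool" where
  "L2 M g \<longleftrightarrow> g \<in> borel_measurable M \<and> integrable M (\<lambda>x. (g x)\<^sup>2)"

definition T_op :: "(nat \<Rightarrow> 'a set) \<Rightarrow> ('a \<Rightarrow> 'a) \<Rightarrow> (nat \<Rightarrow> 'a \<Rightarrow> real) \<Rightarrow> nat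
    \<Rightarrow> ('a \<Rightarrow> real) \<Rightarrow> 'a \<Rightarrow> real" where
  "T_op R F Phi_finv i \<phi> x = indicator (R i) x * sqrt (Phi_finv i x) * \<phi> (F x)"

definition is_adjoint_image ::
  "'a measure \<Rightarrow> (('a \<Rightarrow> real) \<Rightarrow> 'a \<Rightarrow> real) \<Rightarrow> ('a \<Rightarrow> real) \<Rightarrow> ('a \<Rightarrow> real) \<Rightarrow> bool" where
  "is_adjoint_image M T \<psi> g \<longleftrightarrow> L2 M g \<and>
     (\<forall>\<phi>. L2 M \<phi> \<longrightarrow> (\<integral>x. T \<phi> x * \<psi> x \<partial>M) = (\<integral>x. \<phi> x * g x \<partial>M))"

definition is_PF :: "'a measure \<Rightarrow> ('a \<Rightarrow> 'a) \<Rightarrow> ('a \<Rightarrow> real) \<Rightarrow> ('a \<Rightarrow> real) \<Rightarrow> bool" where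
  "is_PF M F \<psi> p \<longleftrightarrow> integrable M p \<and>
     (\<forall>E\<in>sets M. (LINT x:E|M. p x) = (LINT x:(F -` E \<inter> space M)|M. \<psi> x))"

end

theory Submission
  imports Defs
begin

(* On R_i the map F inverts f_i, and the Radon-Nikodym derivative turns this into the change of
   variables  int Phi_{f_i^-1} * (u o F) = int_{D_i} u.  It identifies the adjoint explicitly,
   T_i^* psi = chi_{D_i} * (psi o f_i) / sqrt (Phi_{f_i^-1} o f_i), and shows that (T_i^* sqrt phi)^2
   is the Perron-Frobenius image of chi_{R_i} * phi.  The R_i being a.e. disjoint, the N-th partial
   sum is the image of phi restricted to R_1 u ... u R_N, which gives part 1 by uniqueness of
   P_F-images.  Since P_F preserves positivity and integrals, the L_1-distance in part 2 equals
   the integral of phi off R_1 u ... u R_N, which tends to 0 by dominated convergence.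
   Only conditions (1)-(3) and (6) of the branching system are needed; the entries of A play
   no role. *)

section \<open>Perron-Frobenius images\<close>

lemma set_integrable_if_integrable:
  fixes f :: "'a \<Rightarrow> 'b::{banach, second_countable_topology}"
  shows "A \<in> sets M \<Longrightarrow> integrable M f \<Longrightarrow> set_integrable M A f"
  unfolding set_integrable_def by (rule integrable_mult_indicator)

lemma is_PF_unique:
  assumes "is_PF M F \<psi> p" "is_PF M F \<psi> q"
  shows "AE x in M. p x = q x"
  using assms unfolding is_PF_def by (intro density_unique_real) auto

lemma is_PF_nonneg:
  assumes "sigma_finite_measure M" and PF: "is_PF M F \<psi> p" and nonneg: "AE x in M. 0 \<le> \<psi> x"
  shows "AE x in M. 0 \<le> p x"
proof (rule sigma_finite_measure.density_nonneg[OF assms(1)])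
  show "integrable M p" using PF by (simp add: is_PF_def)
next
  fix E assume "E \<in> sets M"
  have "0 \<le> (LINT x:F -` E \<inter> space M|M. \<psi> x)"
    unfolding set_lebesgue_integral_def
    by (rule integral_nonneg_AE) (use nonneg in \<open>auto simp: indicator_def\<close>)
  with PF \<open>E \<in> sets M\<close> show "0 \<le> (LINT x:E|M. p x)" by (simp add: is_PF_def)
qed

lemma is_PF_integral:
  assumes "F \<in> measurable M M" "is_PF M F \<psi> p" "integrable M \<psi>"
  shows "(\<integral>x. p x \<partial>M) = (\<integral>x. \<psi> x \<partial>M)"
proof -
  have "F -` space M \<inter> space M = space M" using measurable_space[OF assms(1)] by auto
  with assms(2,3) show ?thesis
    unfolding is_PF_def by (metis sets.top set_integral_space)
qed

lemma is_PF_cong_AE: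
  assumes F[measurable]: "F \<in> measurable M M" and PF: "is_PF M F \<psi> p"
    and [measurable]: "integrable M \<psi>" "\<psi>' \<in> borel_measurable M" "p' \<in> borel_measurable M"
    and eq: "AE x in M. \<psi> x = \<psi>' x" "AE x in M. p x = p' x"
  shows "is_PF M F \<psi>' p'"
  unfolding is_PF_def
proof safe
  have [measurable]: "p \<in> borel_measurable M" using PF by (auto simp: is_PF_def)
  show "integrable M p'" using PF eq(2) by (subst integrable_cong_AE[where g = p]) (auto simp: is_PF_def)
  fix E assume [measurable]: "E \<in> sets M"
  have "(LINT x:E|M. p' x) = (LINT x:E|M. p x)"
    using eq(2) by (intro set_lebesgue_integral_cong_AE) auto
  also have "\<dots> = (LINT x:F -` E \<inter> space M|M. \<psi> x)" using PF by (simp add: is_PF_def)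
  also have "\<dots> = (LINT x:F -` E \<inter> space M|M. \<psi>' x)"
    using eq(1) by (intro set_lebesgue_integral_cong_AE) auto
  finally show "(LINT x:E|M. p' x) = (LINT x:F -` E \<inter> space M|M. \<psi>' x)" .
qed

lemma is_PF_diff:
  assumes F[measurable]: "F \<in> measurable M M"
    and "is_PF M F \<psi> p" "is_PF M F \<psi>' p'" "integrable M \<psi>" "integrable M \<psi>'"
  shows "is_PF M F (\<lambda>x. \<psi> x - \<psi>' x) (\<lambda>x. p x - p' x)"
  unfolding is_PF_def
proof safe
  show "integrable M (\<lambda>x. p x - p' x)" using assms(2,3) by (auto simp: is_PF_def)
  fix E assume [measurable]: "E \<in> sets M"
  have "set_integrable M E p" "set_integrable M E p'"
    "set_integrable M (F -` E \<inter> space M) \<psi>" "set_integrable M (F -` E \<inter> space M) \<psi>'"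
    using assms by (auto simp: is_PF_def intro!: set_integrable_if_integrable)
  then show "(LINT x:E|M. p x - p' x) = (LINT x:F -` E \<inter> space M|M. \<psi> x - \<psi>' x)"
    using assms(2,3) \<open>E \<in> sets M\<close> by (simp add: is_PF_def)
qed

lemma is_PF_sum:
  assumes F[measurable]: "F \<in> measurable M M"
    and "\<And>i. i \<in> I \<Longrightarrow> is_PF M F (\<psi> i) (p i)" "\<And>i. i \<in> I \<Longrightarrow> integrable M (\<psi> i)"
  shows "is_PF M F (\<lambda>x. \<Sum>i\<in>I. \<psi> i x) (\<lambda>x. \<Sum>i\<in>I. p i x)"
  unfolding is_PF_def
proof safe
  show "integrable M (\<lambda>x. \<Sum>i\<in>I. p i x)" using assms(2) by (auto simp: is_PF_def)
  fix E assume [measurable]: "E \<in> sets M"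
  have "(LINT x:E|M. \<Sum>i\<in>I. p i x) = (\<Sum>i\<in>I. LINT x:E|M. p i x)"
    unfolding set_lebesgue_integral_def scaleR_sum_right
    using assms(2) by (intro Bochner_Integration.integral_sum integrable_mult_indicator) (auto simp: is_PF_def)
  also have "\<dots> = (\<Sum>i\<in>I. LINT x:F -` E \<inter> space M|M. \<psi> i x)"
    using assms(2) by (intro sum.cong) (auto simp: is_PF_def)
  also have "\<dots> = (LINT x:F -` E \<inter> space M|M. \<Sum>i\<in>I. \<psi> i x)"
    unfolding set_lebesgue_integral_def scaleR_sum_right
    using assms(3) by (intro Bochner_Integration.integral_sum[symmetric] integrable_mult_indicator) auto
  finally show "(LINT x:E|M. \<Sum>i\<in>I. p i x) = (LINT x:F -` E \<inter> space M|M. \<Sum>i\<in>I. \<psi> i x)" .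
qed

section \<open>Square-integrable functions\<close>

lemma L2_integrable_mult:
  assumes "L2 M u" "L2 M v"
  shows "integrable M (\<lambda>x. u x * v x)"
proof (rule Bochner_Integration.integrable_bound)
  show "integrable M (\<lambda>x. (u x)\<^sup>2 + (v x)\<^sup>2)" using assms by (auto simp: L2_def)
  show "(\<lambda>x. u x * v x) \<in> borel_measurable M" using assms by (auto simp: L2_def)
  have "\<bar>u x * v x\<bar> \<le> (u x)\<^sup>2 + (v x)\<^sup>2" for x
  proof -
    have "2 * \<bar>u x\<bar> * \<bar>v x\<bar> \<le> (u x)\<^sup>2 + (v x)\<^sup>2"
      using sum_squares_bound[of "\<bar>u x\<bar>" "\<bar>v x\<bar>"] by simp
    moreover have "0 \<le> \<bar>u x\<bar> * \<bar>v x\<bar>" by simp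
    ultimately show ?thesis unfolding abs_mult by linarith
  qed
  then show "AE x in M. norm (u x * v x) \<le> norm ((u x)\<^sup>2 + (v x)\<^sup>2)" by auto
qed

lemma L2_diff:
  assumes "L2 M u" "L2 M v"
  shows "L2 M (\<lambda>x. u x - v x)"
proof -
  have "integrable M (\<lambda>x. u x * u x - 2 * (u x * v x) + v x * v x)"
    using L2_integrable_mult[OF assms(1,1)] L2_integrable_mult[OF assms] L2_integrable_mult[OF assms(2,2)]
    by auto
  with assms show ?thesis unfolding L2_def by (auto simp: power2_eq_square algebra_simps)
qed

lemma L2_sqrt:
  assumes "integrable M \<phi>" "AE x in M. 0 \<le> \<phi> x"
  shows "L2 M (\<lambda>x. sqrt (\<phi> x))"
  unfolding L2_def
proof
  show "integrable M (\<lambda>x. (sqrt (\<phi> x))\<^sup>2)"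
    using assms by (subst integrable_cong_AE[where g = \<phi>]) auto
qed (use assms in auto)

lemma is_adjoint_image_unique:
  assumes g: "is_adjoint_image M T \<psi> g" and h: "is_adjoint_image M T \<psi> h"
  shows "AE x in M. g x = h x"
proof -
  have "L2 M g" "L2 M h" using g h by (auto simp: is_adjoint_image_def)
  then have d: "L2 M (\<lambda>x. g x - h x)" by (rule L2_diff)
  have "(\<integral>x. (g x - h x) * g x \<partial>M) = (\<integral>x. (g x - h x) * h x \<partial>M)"
    using g h d by (simp add: is_adjoint_image_def)
  moreover have "(\<integral>x. (g x - h x)\<^sup>2 \<partial>M) =
      (\<integral>x. (g x - h x) * g x \<partial>M) - (\<integral>x. (g x - h x) * h x \<partial>M)"
    using L2_integrable_mult[OF d \<open>L2 M g\<close>] L2_integrable_mult[OF d \<open>L2 M h\<close>]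
    by (subst Bochner_Integration.integral_diff[symmetric]) (auto simp: power2_eq_square right_diff_distrib)
  ultimately have "(\<integral>x. (g x - h x)\<^sup>2 \<partial>M) = 0" by simp
  then have "AE x in M. (g x - h x)\<^sup>2 = 0"
    using d by (subst integral_nonneg_eq_0_iff_AE[symmetric]) (auto simp: L2_def)
  then show ?thesis by eventually_elim simp
qed

section \<open>A single branch\<close>

lemma null_sets_image:
  assumes "\<forall>E\<in>sets M. E \<subseteq> S \<longrightarrow>
      h ` E \<in> sets M \<and> emeasure M (h ` E) = (\<integral>\<^sup>+x\<in>E. ennreal (w x) \<partial>M)"
    and "E \<in> null_sets M" "E \<subseteq> S"
  shows "h ` E \<in> null_sets M"
proof -
  have "E \<in> sets M" using assms(2) by auto
  then have "h ` E \<in> sets M" "emeasure M (h ` E) = (\<integral>\<^sup>+x. ennreal (w x) * indicator E x \<partial>M)"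
    using assms(1,3) by auto
  then show ?thesis using nn_integral_null_set[OF assms(2)] by auto
qed

(* Conditions (1), (2) and (6) of a branching system for one index i, with f_i^-1 = F on R_i. *)
locale branch =
  fixes M :: "'a measure" and F :: "'a \<Rightarrow> 'a" and D R :: "'a set" and f :: "'a \<Rightarrow> 'a"
    and Phi_f Phi_finv :: "'a \<Rightarrow> real"
  assumes nonsingular: "nonsingular M F"
    and sets_D[measurable]: "D \<in> sets M" and sets_R[measurable]: "R \<in> sets M"
    and measurable_f: "f \<in> measurable (restrict_space M D) M"
    and image_f: "f ` D \<subseteq> R" "aeeq M (f ` D) R"
    and F_f_AE: "AE x in M. x \<in> D \<longrightarrow> F (f x) = x"
    and emeasure_image_f: "\<forall>E\<in>sets M. E \<subseteq> D \<longrightarrow>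
      f ` E \<in> sets M \<and> emeasure M (f ` E) = (\<integral>\<^sup>+x\<in>E. ennreal (Phi_f x) \<partial>M)"
    and measurable_Phi_finv[measurable]: "Phi_finv \<in> borel_measurable M"
    and Phi_finv_nonneg: "\<forall>x\<in>space M. 0 \<le> Phi_finv x"
    and Phi_finv_outside: "\<forall>x. x \<notin> R \<longrightarrow> Phi_finv x = 0"
    and emeasure_image_F: "\<forall>E\<in>sets M. E \<subseteq> R \<longrightarrow>
      F ` E \<in> sets M \<and> emeasure M (F ` E) = (\<integral>\<^sup>+x\<in>E. ennreal (Phi_finv x) \<partial>M)"
begin

lemma measurable_F[measurable]: "F \<in> measurable M M"
  using nonsingular by (simp add: nonsingular_def)

lemma exists_inverse_part:
  "\<exists>G\<in>sets M. G \<subseteq> R \<and> R - G \<in> null_sets M \<and> (\<forall>x\<in>G. F x \<in> D \<and> f (F x) = x) \<and>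
     D - F ` G \<in> null_sets M"
proof -
  obtain N where N: "N \<in> null_sets M" "\<And>x. x \<in> space M - N \<Longrightarrow> x \<in> D \<Longrightarrow> F (f x) = x"
    using AE_E3[OF F_f_AE] by blast
  define N' where "N' = N \<inter> D"
  have N': "N' \<in> null_sets M" "N' \<subseteq> D" unfolding N'_def using null_set_Int2[OF N(1) sets_D] by auto
  have F_f: "F (f y) = y" if "y \<in> D - N'" for y
    using that N(2) sets.sets_into_space[OF sets_D] by (auto simp: N'_def)
  define G where "G = f ` (D - N')"
  have "G \<in> sets M" unfolding G_def using emeasure_image_f N'(1) by auto
  moreover have "G \<subseteq> R" unfolding G_def using image_f(1) by auto
  moreover have "R - G \<in> null_sets M"
  proof (rule null_sets_subset)
    have "R - f ` D \<in> null_sets M" using image_f(2) by (auto simp: aeeq_def)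
    moreover have "f ` N' \<in> null_sets M" by (rule null_sets_image[OF emeasure_image_f N'])
    ultimately show "(R - f ` D) \<union> f ` N' \<in> null_sets M" by auto
    show "R - G \<in> sets M" using \<open>G \<in> sets M\<close> by auto
  qed (auto simp: G_def)
  moreover have "F x \<in> D \<and> f (F x) = x" if "x \<in> G" for x
    using that F_f by (auto simp: G_def)
  moreover have "F ` G = D - N'"
    using F_f by (force simp: G_def image_image)
  moreover have "D - (D - N') = N'" using N'(2) by auto
  ultimately show ?thesis using N'(1) by (intro bexI[of _ G]) auto
qed

lemma distr_density_Phi_finv: "distr (density M Phi_finv) M F = density M (indicator D)"
proof (rule measure_eqI)
  fix A assume "A \<in> sets (distr (density M Phi_finv) M F)"
  then have A[measurable]: "A \<in> sets M" by simp
  obtain G where G: "G \<in> sets M" "G \<subseteq> R" "R - G \<in> null_sets M"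
    "\<forall>x\<in>G. F x \<in> D \<and> f (F x) = x" "D - F ` G \<in> null_sets M"
    using exists_inverse_part by blast
  have "F -` A \<inter> G = (F -` A \<inter> space M) \<inter> G" using sets.sets_into_space[OF G(1)] by auto
  then have FAG: "F -` A \<inter> G \<in> sets M" "F -` A \<inter> G \<subseteq> R"
    using G(1,2) by auto
  have "emeasure (distr (density M Phi_finv) M F) A =
      (\<integral>\<^sup>+x. ennreal (Phi_finv x) * indicator (F -` A \<inter> space M) x \<partial>M)"
    by (simp add: emeasure_distr emeasure_density)
  also have "\<dots> = (\<integral>\<^sup>+x. ennreal (Phi_finv x) * indicator (F -` A \<inter> G) x \<partial>M)"
  proof (rule nn_integral_cong_AE)
    show "AE x in M. ennreal (Phi_finv x) * indicator (F -` A \<inter> space M) x =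
        ennreal (Phi_finv x) * indicator (F -` A \<inter> G) x"
      using AE_not_in[OF G(3)] sets.sets_into_space[OF G(1)] G(2) Phi_finv_outside
      by (auto elim!: eventually_mono simp: indicator_def)
  qed
  also have "\<dots> = emeasure M (F ` (F -` A \<inter> G))"
    using emeasure_image_F FAG by simp
  also have "F ` (F -` A \<inter> G) = A \<inter> F ` G" by auto
  also have "emeasure M (A \<inter> F ` G) = emeasure M (A \<inter> D)"
  proof -
    have "A \<inter> D = (A \<inter> F ` G) \<union> (A \<inter> (D - F ` G))" using G(4) by auto
    moreover have "A \<inter> (D - F ` G) \<in> null_sets M" using null_set_Int2[OF G(5) A] by (simp add: Int_commute)
    moreover have "F ` G \<in> sets M" using emeasure_image_F G(1,2) by auto
    ultimately show ?thesis by (simp add: emeasure_Un_null_set)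
  qed
  also have "\<dots> = (\<integral>\<^sup>+x. indicator D x * indicator A x \<partial>M)"
    by (simp add: indicator_inter_arith[symmetric] Int_commute)
  also have "\<dots> = emeasure (density M (indicator D)) A"
    by (simp add: emeasure_density)
  finally show "emeasure (distr (density M Phi_finv) M F) A = emeasure (density M (indicator D)) A" .
qed simp

lemma nn_integral_Phi_finv_comp_F:
  fixes u :: "'a \<Rightarrow> ennreal"
  assumes [measurable]: "u \<in> borel_measurable M"
  shows "(\<integral>\<^sup>+x. Phi_finv x * u (F x) \<partial>M) = (\<integral>\<^sup>+x. indicator D x * u x \<partial>M)"
proof -
  have "(\<integral>\<^sup>+x. Phi_finv x * u (F x) \<partial>M) = (\<integral>\<^sup>+x. u x \<partial>distr (density M Phi_finv) M F)"
    by (simp add: nn_integral_distr nn_integral_density)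
  then show ?thesis by (simp add: distr_density_Phi_finv nn_integral_density)
qed

lemma integral_Phi_finv_comp_F:
  fixes u :: "'a \<Rightarrow> real"
  assumes [measurable]: "u \<in> borel_measurable M"
  shows "(\<integral>x. Phi_finv x * u (F x) \<partial>M) = (\<integral>x. indicator D x * u x \<partial>M)"
proof -
  have "(\<integral>x. Phi_finv x * u (F x) \<partial>M) = (\<integral>x. u x \<partial>distr (density M Phi_finv) M F)"
    by (simp add: integral_distr integral_density Phi_finv_nonneg)
  also have "\<dots> = (\<integral>x. u x \<partial>density M (\<lambda>x. ennreal (indicator D x)))"
    by (simp add: distr_density_Phi_finv ennreal_indicator)
  also have "\<dots> = (\<integral>x. indicator D x * u x \<partial>M)"
    by (subst integral_density) auto
  finally show ?thesis .
qed

lemma Phi_finv_pos_AE: "AE x in M. x \<in> R \<longrightarrow> 0 < Phi_finv x"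
proof -
  define Z where "Z = {x\<in>R. Phi_finv x = 0}"
  have [measurable]: "Z \<in> sets M" unfolding Z_def by measurable
  have "emeasure M (F ` Z) = (\<integral>\<^sup>+x\<in>Z. ennreal (Phi_finv x) \<partial>M)" "F ` Z \<in> sets M"
    using emeasure_image_F by (auto simp: Z_def)
  moreover have "(\<integral>\<^sup>+x\<in>Z. ennreal (Phi_finv x) \<partial>M) = 0"
    by (subst nn_integral_cong[where v = "\<lambda>_. 0"]) (auto simp: Z_def indicator_def)
  ultimately have "F -` F ` Z \<inter> space M \<in> null_sets M"
    using nonsingular by (auto simp: nonsingular_def)
  moreover have "Z \<subseteq> F -` F ` Z \<inter> space M" using sets.sets_into_space[of Z M] by auto
  ultimately have "Z \<in> null_sets M" using null_sets_subset \<open>Z \<in> sets M\<close> by blast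
  then have "AE x in M. x \<notin> Z" by (rule AE_not_in)
  then show ?thesis
  proof (rule AE_mp, intro AE_I2 impI)
    fix x assume "x \<in> space M" "x \<notin> Z" "x \<in> R"
    then show "0 < Phi_finv x" using Phi_finv_nonneg by (force simp: Z_def)
  qed
qed

definition adjoint :: "('a \<Rightarrow> real) \<Rightarrow> 'a \<Rightarrow> real" where
  "adjoint \<psi> x = indicator D x * (\<psi> (f x) / sqrt (Phi_finv (f x)))"

lemma measurable_adjoint[measurable]:
  assumes [measurable]: "\<psi> \<in> borel_measurable M"
  shows "adjoint \<psi> \<in> borel_measurable M"
proof -
  have "(\<lambda>y. \<psi> y / sqrt (Phi_finv y)) \<circ> f \<in> borel_measurable (restrict_space M D)"
    by (rule measurable_comp[OF measurable_f]) measurable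
  then have "(\<lambda>x. indicator D x *\<^sub>R ((\<lambda>y. \<psi> y / sqrt (Phi_finv y)) \<circ> f) x) \<in> borel_measurable M"
    by (subst borel_measurable_restrict_space_iff[symmetric]) auto
  then show ?thesis unfolding adjoint_def[abs_def] by (simp add: o_def)
qed

lemma adjoint_outside: "x \<notin> D \<Longrightarrow> adjoint \<psi> x = 0"
  by (simp add: adjoint_def)

lemma sqrt_Phi_finv_mult_adjoint_comp_F_AE:
  "AE x in M. x \<in> R \<longrightarrow> sqrt (Phi_finv x) * adjoint \<psi> (F x) = \<psi> x"
proof -
  obtain G where G: "R - G \<in> null_sets M" "\<forall>x\<in>G. F x \<in> D \<and> f (F x) = x"
    using exists_inverse_part by blast
  show ?thesis
    using AE_not_in[OF G(1)] Phi_finv_pos_AE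
    by eventually_elim (use G(2) in \<open>auto simp: adjoint_def\<close>)
qed

lemma Phi_finv_mult_adjoint_comp_F_AE:
  "AE x in M. Phi_finv x * adjoint \<psi> (F x) = indicator R x * sqrt (Phi_finv x) * \<psi> x"
  and Phi_finv_mult_square_adjoint_comp_F_AE:
  "AE x in M. Phi_finv x * (adjoint \<psi> (F x))\<^sup>2 = indicator R x * (\<psi> x)\<^sup>2"
proof -
  have "AE x in M. x \<in> space M" by simp
  with sqrt_Phi_finv_mult_adjoint_comp_F_AE[of \<psi>]
  have "AE x in M. Phi_finv x * adjoint \<psi> (F x) = indicator R x * sqrt (Phi_finv x) * \<psi> x
      \<and> Phi_finv x * (adjoint \<psi> (F x))\<^sup>2 = indicator R x * (\<psi> x)\<^sup>2"
  proof eventually_elim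
    case (elim x)
    show ?case
    proof (cases "x \<in> R")
      case True
      let ?s = "sqrt (Phi_finv x)" and ?a = "adjoint \<psi> (F x)"
      have s: "?s * ?s = Phi_finv x" using elim(2) Phi_finv_nonneg by simp
      have e: "?s * ?a = \<psi> x" using elim(1) True by blast
      have "Phi_finv x * ?a = ?s * (?s * ?a)" by (simp only: mult.assoc[symmetric] s)
      also have "\<dots> = indicator R x * ?s * \<psi> x" using True by (simp only: e indicator_simps mult_1)
      finally have "Phi_finv x * ?a = indicator R x * ?s * \<psi> x" .
      moreover have "Phi_finv x * ?a\<^sup>2 = indicator R x * (\<psi> x)\<^sup>2"
        using True
        by (simp only: e[symmetric] power_mult_distrib power2_eq_square[of ?s] s indicator_simps mult_1)
      ultimately show ?thesis ..
    next
      case False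
      then show ?thesis using Phi_finv_outside by simp
    qed
  qed
  then show "AE x in M. Phi_finv x * adjoint \<psi> (F x) = indicator R x * sqrt (Phi_finv x) * \<psi> x"
    and "AE x in M. Phi_finv x * (adjoint \<psi> (F x))\<^sup>2 = indicator R x * (\<psi> x)\<^sup>2"
    by auto
qed

lemma L2_adjoint:
  assumes "L2 M \<psi>"
  shows "L2 M (adjoint \<psi>)"
proof -
  have [measurable]: "\<psi> \<in> borel_measurable M" using assms by (simp add: L2_def)
  then have adj[measurable]: "adjoint \<psi> \<in> borel_measurable M" by (rule measurable_adjoint)
  have "(\<integral>\<^sup>+x. ennreal ((adjoint \<psi> x)\<^sup>2) \<partial>M) =
      (\<integral>\<^sup>+x. indicator D x * ennreal ((adjoint \<psi> x)\<^sup>2) \<partial>M)"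
    by (intro nn_integral_cong) (auto simp: adjoint_outside indicator_def)
  also have "\<dots> = (\<integral>\<^sup>+x. ennreal (Phi_finv x) * ennreal ((adjoint \<psi> (F x))\<^sup>2) \<partial>M)"
    by (rule nn_integral_Phi_finv_comp_F[symmetric]) measurable
  also have "\<dots> = (\<integral>\<^sup>+x. ennreal (indicator R x * (\<psi> x)\<^sup>2) \<partial>M)"
    using Phi_finv_mult_square_adjoint_comp_F_AE[of \<psi>]
    by (intro nn_integral_cong_AE) (use Phi_finv_nonneg in \<open>auto simp: ennreal_mult'[symmetric]\<close>)
  also have "\<dots> < \<infinity>"
  proof -
    have "integrable M (\<lambda>x. indicator R x * (\<psi> x)\<^sup>2)"
      using assms integrable_mult_indicator[OF sets_R, of "\<lambda>x. (\<psi> x)\<^sup>2"] by (simp add: L2_def)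
    then show ?thesis
      by (subst nn_integral_eq_integral) auto
  qed
  finally have "integrable M (\<lambda>x. (adjoint \<psi> x)\<^sup>2)"
    by (rule integrableI_nonneg[rotated 2]) (use adj in auto)
  with adj show ?thesis unfolding L2_def ..
qed

lemma is_adjoint_image_adjoint:
  assumes "L2 M \<psi>"
  shows "is_adjoint_image M (\<lambda>a x. indicator R x * sqrt (Phi_finv x) * a (F x)) \<psi> (adjoint \<psi>)"
  unfolding is_adjoint_image_def
proof (intro conjI allI impI)
  show "L2 M (adjoint \<psi>)" using assms by (rule L2_adjoint)
  fix a assume "L2 M a"
  have [measurable]: "a \<in> borel_measurable M" "\<psi> \<in> borel_measurable M"
    using \<open>L2 M a\<close> assms by (auto simp: L2_def)
  have "(\<integral>x. a x * adjoint \<psi> x \<partial>M) = (\<integral>x. indicator D x * (a x * adjoint \<psi> x) \<partial>M)"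
    by (intro Bochner_Integration.integral_cong) (auto simp: adjoint_outside indicator_def)
  also have "\<dots> = (\<integral>x. Phi_finv x * (a (F x) * adjoint \<psi> (F x)) \<partial>M)"
    by (rule integral_Phi_finv_comp_F[symmetric]) measurable
  also have "\<dots> = (\<integral>x. indicator R x * sqrt (Phi_finv x) * a (F x) * \<psi> x \<partial>M)"
    using Phi_finv_mult_adjoint_comp_F_AE[of \<psi>]
    by (intro integral_cong_AE) (auto elim!: eventually_mono simp: ac_simps)
  finally show "(\<integral>x. indicator R x * sqrt (Phi_finv x) * a (F x) * \<psi> x \<partial>M) =
      (\<integral>x. a x * adjoint \<psi> x \<partial>M)"
    by simp
qed

lemma is_PF_square_adjoint:
  assumes "L2 M \<psi>"
  shows "is_PF M F (\<lambda>x. indicator R x * (\<psi> x)\<^sup>2) (\<lambda>x. (adjoint \<psi> x)\<^sup>2)"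
  unfolding is_PF_def
proof safe
  show "integrable M (\<lambda>x. (adjoint \<psi> x)\<^sup>2)" using L2_adjoint[OF assms] by (simp add: L2_def)
  fix E assume [measurable]: "E \<in> sets M"
  have [measurable]: "\<psi> \<in> borel_measurable M" using assms by (simp add: L2_def)
  have "(LINT x:E|M. (adjoint \<psi> x)\<^sup>2) =
      (\<integral>x. indicator D x * (indicator E x * (adjoint \<psi> x)\<^sup>2) \<partial>M)"
    unfolding set_lebesgue_integral_def
    by (intro Bochner_Integration.integral_cong) (auto simp: adjoint_outside indicator_def)
  also have "\<dots> = (\<integral>x. Phi_finv x * (indicator E (F x) * (adjoint \<psi> (F x))\<^sup>2) \<partial>M)"
    by (rule integral_Phi_finv_comp_F[symmetric]) measurable
  also have "\<dots> = (LINT x:F -` E \<inter> space M|M. indicator R x * (\<psi> x)\<^sup>2)"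
    unfolding set_lebesgue_integral_def
    using Phi_finv_mult_square_adjoint_comp_F_AE[of \<psi>]
    by (intro integral_cong_AE) (auto elim!: eventually_mono simp: indicator_def)
  finally show "(LINT x:E|M. (adjoint \<psi> x)\<^sup>2) =
      (LINT x:F -` E \<inter> space M|M. indicator R x * (\<psi> x)\<^sup>2)" .
qed

lemma is_PF_square_if_is_adjoint_image:
  assumes \<phi>: "integrable M \<phi>" "AE x in M. 0 \<le> \<phi> x"
    and g: "is_adjoint_image M (\<lambda>a x. indicator R x * sqrt (Phi_finv x) * a (F x))
      (\<lambda>x. sqrt (\<phi> x)) g"
  shows "is_PF M F (\<lambda>x. indicator R x * \<phi> x) (\<lambda>x. (g x)\<^sup>2)"
proof (rule is_PF_cong_AE)
  have L2: "L2 M (\<lambda>x. sqrt (\<phi> x))" using \<phi> by (rule L2_sqrt)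
  then show "is_PF M F (\<lambda>x. indicator R x * (sqrt (\<phi> x))\<^sup>2)
      (\<lambda>x. (adjoint (\<lambda>x. sqrt (\<phi> x)) x)\<^sup>2)"
    by (rule is_PF_square_adjoint)
  show "integrable M (\<lambda>x. indicator R x * (sqrt (\<phi> x))\<^sup>2)"
    using L2 integrable_mult_indicator[OF sets_R, of "\<lambda>x. (sqrt (\<phi> x))\<^sup>2"] by (simp add: L2_def)
  show "AE x in M. indicator R x * (sqrt (\<phi> x))\<^sup>2 = indicator R x * \<phi> x"
    using \<phi>(2) by eventually_elim simp
  show "AE x in M. (adjoint (\<lambda>x. sqrt (\<phi> x)) x)\<^sup>2 = (g x)\<^sup>2"
    using is_adjoint_image_unique[OF is_adjoint_image_adjoint[OF L2] g] by eventually_elim simp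
  show "(\<lambda>x. (g x)\<^sup>2) \<in> borel_measurable M"
    using g by (auto simp: is_adjoint_image_def L2_def)
qed (use \<phi>(1) in auto)

end

section \<open>Summing over the branches\<close>

lemma branch_if_A_inf_branching_system:
  assumes "A_inf_branching_system M A f D R F Phi_f Phi_finv"
  shows "branch M F (D i) (R i) (f i) (Phi_f i) (Phi_finv i)"
  using assms by unfold_locales (simp_all add: A_inf_branching_system_def)

lemma AE_pairwise_disjoint:
  fixes R :: "'i::countable \<Rightarrow> 'a set"
  assumes "\<And>i. R i \<in> sets M" "\<And>i j. i \<noteq> j \<Longrightarrow> emeasure M (R i \<inter> R j) = 0"
  shows "AE x in M. \<forall>i j. i \<noteq> j \<longrightarrow> x \<notin> R i \<inter> R j"
proof -
  have "AE x in M. i \<noteq> j \<longrightarrow> x \<notin> R i \<inter> R j" for i j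
  proof (cases "i = j")
    case False
    with assms have "R i \<inter> R j \<in> null_sets M" by auto
    from AE_not_in[OF this] show ?thesis by eventually_elim simp
  qed simp
  then show ?thesis by (simp add: AE_all_countable)
qed

lemma sum_indicator_eq_indicator_UN:
  assumes "\<forall>i j. i \<noteq> j \<longrightarrow> x \<notin> R i \<inter> R j" "finite I"
  shows "(\<Sum>i\<in>I. indicator (R i) x) = (indicator (\<Union>i\<in>I. R i) x :: real)"
proof -
  have "disjoint_family_on (\<lambda>i. R i \<inter> {x}) I"
    using assms(1) by (auto simp: disjoint_family_on_def)
  have "(\<Sum>i\<in>I. indicator (R i) x) = (\<Sum>i\<in>I. indicator (R i \<inter> {x}) x :: real)"
    by (simp add: indicator_def)
  also have "\<dots> = indicator (\<Union>i\<in>I. R i \<inter> {x}) x"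
    by (rule indicator_UN_disjoint[symmetric]) fact+
  also have "\<dots> = indicator (\<Union>i\<in>I. R i) x"
    by (simp add: indicator_def)
  finally show ?thesis .
qed

lemma is_PF_indicator_UN:
  assumes F[measurable]: "F \<in> measurable M M" and \<phi>[measurable]: "integrable M \<phi>"
    and R[measurable]: "\<And>i. R i \<in> sets M"
    and disjoint: "AE x in M. \<forall>i j. i \<noteq> j \<longrightarrow> x \<notin> R i \<inter> R j"
    and PF: "\<And>i. is_PF M F (\<lambda>x. indicator (R i) x * \<phi> x) (q i)"
    and "finite I"
  shows "is_PF M F (\<lambda>x. indicator (\<Union>i\<in>I. R i) x * \<phi> x) (\<lambda>x. \<Sum>i\<in>I. q i x)"
proof (rule is_PF_cong_AE[OF F is_PF_sum[OF F PF]])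
  show "integrable M (\<lambda>x. indicator (R i) x * \<phi> x)" for i
    using integrable_mult_indicator[OF R \<phi>] by simp
  then show "integrable M (\<lambda>x. \<Sum>i\<in>I. indicator (R i) x * \<phi> x)" by auto
  show "AE x in M. (\<Sum>i\<in>I. indicator (R i) x * \<phi> x) = indicator (\<Union>i\<in>I. R i) x * \<phi> x"
    using disjoint
    by eventually_elim (simp add: sum_distrib_right[symmetric] sum_indicator_eq_indicator_UN \<open>finite I\<close>)
  show "(\<lambda>x. \<Sum>i\<in>I. q i x) \<in> borel_measurable M"
    using PF by (intro borel_measurable_integrable integrable_sum) (auto simp: is_PF_def)
qed (auto simp: \<open>finite I\<close>)

lemma is_PF_indicator_tendsto_L1:
  assumes "sigma_finite_measure M" and F[measurable]: "F \<in> measurable M M"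
    and \<phi>[measurable]: "integrable M \<phi>" and nonneg: "AE x in M. 0 \<le> \<phi> x"
    and U[measurable]: "\<And>N. U N \<in> sets M" and "incseq U"
    and support: "AE x in M. \<phi> x \<noteq> 0 \<longrightarrow> x \<in> (\<Union>N. U N)"
    and PF: "is_PF M F \<phi> p" and PF_U: "\<And>N. is_PF M F (\<lambda>x. indicator (U N) x * \<phi> x) (S N)"
  shows "(\<lambda>N. \<integral>x. \<bar>p x - S N x\<bar> \<partial>M) \<longlonglongrightarrow> 0"
proof -
  define r where "r N x = \<phi> x - indicator (U N) x * \<phi> x" for N x
  have U_int: "integrable M (\<lambda>x. indicator (U N) x * \<phi> x)" for N
    using integrable_mult_indicator[OF U \<phi>] by simp
  then have r_int: "integrable M (r N)" for N
    unfolding r_def using \<phi> by (intro Bochner_Integration.integrable_diff)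
  have PF_r: "is_PF M F (r N) (\<lambda>x. p x - S N x)" for N
    unfolding r_def[abs_def] using \<phi> U_int by (rule is_PF_diff[OF F PF PF_U])
  have PF_r_nonneg: "AE x in M. 0 \<le> p x - S N x" for N
    using nonneg
    by (intro is_PF_nonneg[OF assms(1) PF_r]) (auto elim!: eventually_mono simp: r_def indicator_def)
  have "(\<integral>x. \<bar>p x - S N x\<bar> \<partial>M) = (\<integral>x. r N x \<partial>M)" for N
  proof -
    have "(\<integral>x. \<bar>p x - S N x\<bar> \<partial>M) = (\<integral>x. p x - S N x \<partial>M)"
      using PF_r_nonneg[of N] PF PF_U[of N]
      by (intro integral_cong_AE) (auto elim!: eventually_mono simp: is_PF_def)
    also have "\<dots> = (\<integral>x. r N x \<partial>M)" by (rule is_PF_integral[OF F PF_r r_int])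
    finally show ?thesis .
  qed
  moreover have "(\<lambda>N. \<integral>x. r N x \<partial>M) \<longlonglongrightarrow> (\<integral>x. 0 \<partial>M)"
  proof (rule integral_dominated_convergence[where w = "\<lambda>x. \<bar>\<phi> x\<bar>"])
    show "AE x in M. (\<lambda>N. r N x) \<longlonglongrightarrow> 0"
      using support
    proof eventually_elim
      case (elim x)
      show ?case
      proof (cases "\<phi> x = 0")
        case False
        then obtain N0 where "x \<in> U N0" using elim by auto
        then have "x \<in> U N" if "N0 \<le> N" for N
          using monoD[OF \<open>incseq U\<close> that] by auto
        then have "\<forall>\<^sub>F N in sequentially. r N x = 0"
          unfolding eventually_sequentially r_def by (intro exI[of _ N0]) simp
        then show ?thesis by (rule tendsto_eventually)
      qed (simp add: r_def)
    qed
    show "AE x in M. norm (r N x) \<le> \<bar>\<phi> x\<bar>" for N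
      by (intro AE_I2) (auto simp: r_def indicator_def)
  qed (use r_int \<phi> in auto)
  ultimately show ?thesis by simp
qed

theorem mainTheorem6:
  fixes M :: "'a measure" and A :: "nat \<Rightarrow> nat \<Rightarrow> nat"
    and f :: "nat \<Rightarrow> 'a \<Rightarrow> 'a" and D R :: "nat \<Rightarrow> 'a set" and F :: "'a \<Rightarrow> 'a"
    and Phi_f Phi_finv :: "nat \<Rightarrow> 'a \<Rightarrow> real"
    and \<phi> p :: "'a \<Rightarrow> real" and g :: "nat \<Rightarrow> 'a \<Rightarrow> real"
  assumes "sigma_finite_measure M"
    and "\<forall>i j. A i j \<in> {0, 1}"
    and "A_inf_branching_system M A f D R F Phi_f Phi_finv"
    and "integrable M \<phi>" and "AE x in M. \<phi> x \<ge> 0"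
    and "\<forall>i. is_adjoint_image M (T_op R F Phi_finv i) (\<lambda>x. sqrt (\<phi> x)) (g i)"
    and "is_PF M F \<phi> p"
  shows "(\<forall>N. (AE x in M. \<phi> x \<noteq> 0 \<longrightarrow> x \<in> (\<Union>i<N. R i)) \<longrightarrow>
             (AE x in M. p x = (\<Sum>i<N. (g i x)\<^sup>2)))
       \<and> ((AE x in M. \<phi> x \<noteq> 0 \<longrightarrow> x \<in> (\<Union>i. R i)) \<longrightarrow>
             (\<lambda>N. \<integral>x. \<bar>p x - (\<Sum>i<N. (g i x)\<^sup>2)\<bar> \<partial>M) \<longlonglongrightarrow> 0)"
proof -
  have F[measurable]: "F \<in> measurable M M" and R[measurable]: "\<And>i. R i \<in> sets M"
    and overlap: "\<And>i j. i \<noteq> j \<Longrightarrow> emeasure M (R i \<inter> R j) = 0"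
    using assms(3) by (auto simp: A_inf_branching_system_def nonsingular_def)
  have PF_R: "is_PF M F (\<lambda>x. indicator (R i) x * \<phi> x) (\<lambda>x. (g i x)\<^sup>2)" for i
    using branch.is_PF_square_if_is_adjoint_image[OF branch_if_A_inf_branching_system[OF assms(3)]
        assms(4,5)] assms(6)
    by (simp add: T_op_def[abs_def])
  have "AE x in M. \<forall>i j. i \<noteq> j \<longrightarrow> x \<notin> R i \<inter> R j"
    using R overlap by (rule AE_pairwise_disjoint)
  then have PF_N: "is_PF M F (\<lambda>x. indicator (\<Union>i<N. R i) x * \<phi> x) (\<lambda>x. \<Sum>i<N. (g i x)\<^sup>2)" for N
    by (rule is_PF_indicator_UN[OF F assms(4) R _ PF_R]) simp
  show ?thesis
  proof (intro conjI allI impI)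
    fix N assume "AE x in M. \<phi> x \<noteq> 0 \<longrightarrow> x \<in> (\<Union>i<N. R i)"
    then have "is_PF M F \<phi> (\<lambda>x. \<Sum>i<N. (g i x)\<^sup>2)"
      using integrable_mult_indicator[OF _ assms(4), of "\<Union>i<N. R i"] PF_N[of N] assms(4)
      by (intro is_PF_cong_AE[OF F PF_N]) (auto elim!: eventually_mono simp: is_PF_def indicator_def)
    then show "AE x in M. p x = (\<Sum>i<N. (g i x)\<^sup>2)"
      by (rule is_PF_unique[OF assms(7)])
  next
    assume "AE x in M. \<phi> x \<noteq> 0 \<longrightarrow> x \<in> (\<Union>i. R i)"
    moreover have "incseq (\<lambda>N. \<Union>i<N. R i)" by (intro monoI UN_mono) auto
    ultimately show "(\<lambda>N. \<integral>x. \<bar>p x - (\<Sum>i<N. (g i x)\<^sup>2)\<bar> \<partial>M) \<longlonglongrightarrow> 0"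
      by (intro is_PF_indicator_tendsto_L1[OF assms(1) F assms(4,5) _ _ _ assms(7) PF_N])
        (auto elim!: eventually_mono)
  qed
qed

end
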